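(* Let $P_1\subseteq P_2$ be meet semilattices with $0$ such that $P_1\subseteq P_2$ preserves finite covers and is tight, and let $Y=\bigcup_{x\in P_1}V^{P_2}_x\subseteq T(P_2)$. Then the image of $\mathcal T_c(P_1)$ in $\mathcal T_c(P_2)$ under $U\mapsto re^{-1}(U)$ is exactly the set of compact open subsets of $T(P_2)$ contained in $Y$.
   Context: A meet semilattice with $0$ is a meet semilattice with least element $0$; $P_1\subseteq P_2$ means an injective meet- and $0$-preserving map identifying $P_1$ with a subset of $P_2$. A filter of $P$ is a subset $F$ with $\emptyset\ne F\ne P$, closed upwards and under $\wedge$; $F(P)$ has the topology generated by $U_x=\{F:x\in F\}$, with basis of compact open sets $U_{(x:x_1,\dots,x_n)}=\{F:x\in F,\ x_1,\dots,x_n\notin F\}$. The tight filters $T(P)$ are the closure of the ultrafilters in $F(P)$; $V^P_{(x:x_1,\dots,x_n)}=U_{(x:x_1,\dots,x_n)}\cap T(P)$, $V^P_x=V^P_{(x:)}$. $\mathcal T_c(P)$ is the generalized Boolean algebra of compact open subsets of $T(P)$. A finite cover of $x\in P$ is a finite set of elements $\le x$ such that every $0\ne y\le x$ meets one of them nontrivially; $P_1\subseteq P_2$ preserves finite covers if every finite cover in $P_1$ of $x\in P_1$ is a finite cover of $x$ in $P_2$. In that case $re:T(P_2)\dashrightarrow T(P_1)$, $\xi\mapsto\xi\cap P_1$ (defined when nonempty), is a partial map to tight filters and $U\mapsto re^{-1}(U)$ is an injective generalized Boolean algebra morphism $\mathcal T_c(P_1)\to\mathcal T_c(P_2)$; $P_1\subseteq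 P_2$ is called tight if its image is an ideal (closed under unions and under intersection with arbitrary elements of $\mathcal T_c(P_2)$). *)

theory Defs
  imports "HOL-Analysis.Analysis"
begin

text \<open>A meet semilattice with 0 is modelled by a type of sort
  semilattice_inf and order_bot (bot is the least element 0).\<close>

definition is_filter :: "'a::{semilattice_inf,order_bot} set \<Rightarrow> bool" where
  "is_filter F \<longleftrightarrow> F \<noteq> {} \<and> F \<noteq> UNIV
     \<and> (\<forall>x y. x \<in> F \<and> x \<le> y \<longrightarrow> y \<in> F)
     \<and> (\<forall>x y. x \<in> F \<and> y \<in> F \<longrightarrow> inf x y \<in> F)"

definition filters :: "'a::{semilattice_inf,order_bot} set set" where
  "filters = {F. is_filter F}"

definition Ux :: "'a::{semilattice_inf,order_bot} \<Rightarrow> 'a set set" where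
  "Ux x = {F \<in> filters. x \<in> F}"

text \<open>Topology on the filters: generated by the sets U_x and their complements,
  so that the sets U_(x:x1,...,xn) form a basis.\<close>
definition filter_topology :: "'a::{semilattice_inf,order_bot} set topology" where
  "filter_topology = topology_generated_by {S. \<exists>x. S = Ux x \<or> S = filters - Ux x}"

definition ultrafilters :: "'a::{semilattice_inf,order_bot} set set" where
  "ultrafilters = {F \<in> filters. \<forall>G \<in> filters. F \<subseteq> G \<longrightarrow> G = F}"

definition tight_filters :: "'a::{semilattice_inf,order_bot} set set" where
  "tight_filters = filter_topology closure_of ultrafilters"

definition tight_topology :: "'a::{semilattice_inf,order_bot} set topology" where
  "tight_topology = subtopology filter_topology tight_filters"

definition Vx :: "'a::{semilattice_inf,order_bot} \<Rightarrow> 'a set set" where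
  "Vx x = Ux x \<inter> tight_filters"

definition Tc :: "'a::{semilattice_inf,order_bot} set set set" where
  "Tc = {U. openin tight_topology U \<and> compactin tight_topology U}"

definition finite_cover :: "'a::{semilattice_inf,order_bot} set \<Rightarrow> 'a \<Rightarrow> bool" where
  "finite_cover C x \<longleftrightarrow> finite C \<and> (\<forall>c\<in>C. c \<le> x)
     \<and> (\<forall>y. y \<noteq> bot \<and> y \<le> x \<longrightarrow> (\<exists>c\<in>C. inf c y \<noteq> bot))"

text \<open>P1 \<subseteq> P2: an injective map preserving meets and 0.\<close>
definition semilattice_embedding ::
  "('a::{semilattice_inf,order_bot} \<Rightarrow> 'b::{semilattice_inf,order_bot}) \<Rightarrow> bool" where
  "semilattice_embedding \<iota> \<longleftrightarrow> inj \<iota> \<and> (\<forall>x y. \<iota> (inf x y) = inf (\<iota> x) (\<iota> y)) \<and> \<iota> bot = bot"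

definition preserves_finite_covers ::
  "('a::{semilattice_inf,order_bot} \<Rightarrow> 'b::{semilattice_inf,order_bot}) \<Rightarrow> bool" where
  "preserves_finite_covers \<iota> \<longleftrightarrow>
     (\<forall>C x. finite_cover C x \<longrightarrow> finite_cover (\<iota> ` C) (\<iota> x))"

text \<open>re : T(P2) -> T(P1), xi |-> xi \<inter> P1 (defined when nonempty), and re^{-1}(U).\<close>
definition re_preimage ::
  "('a::{semilattice_inf,order_bot} \<Rightarrow> 'b::{semilattice_inf,order_bot}) \<Rightarrow> 'a set set \<Rightarrow> 'b set set" where
  "re_preimage \<iota> U = {\<xi> \<in> tight_filters. \<iota> -` \<xi> \<noteq> {} \<and> \<iota> -` \<xi> \<in> U}"

definition tight_inclusion ::
  "('a::{semilattice_inf,order_bot} \<Rightarrow> 'b::{semilattice_inf,order_bot}) \<Rightarrow> bool" where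
  "tight_inclusion \<iota> \<longleftrightarrow>
     (let I = re_preimage \<iota> ` (Tc :: 'a set set set) in
       (\<forall>A\<in>I. \<forall>B\<in>I. A \<union> B \<in> I) \<and> (\<forall>A\<in>I. \<forall>W\<in>(Tc :: 'b set set set). A \<inter> W \<in> I))"

end

theory Submission
  imports Defs
begin

text \<open>A compact open subset of T(P1) is a finite union of basic sets V_(x:x1,...,xn). Because the
  inclusion preserves finite covers, the restriction \<xi> \<inter> P1 of a tight filter is again tight,
  and re^{-1} maps V_(x:x1,...,xn) onto the basic set V_(x:x1,...,xn) of T(P2); hence the image
  consists of compact open sets contained in Y. Conversely, a compact open W \<subseteq> Y is covered by
  finitely many V_x = re^{-1}(V_x) with x \<in> P1; their union lies in the image, which by tightness
  is an ideal, and so does its intersection with W, which is W.\<close>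

lemma bot_notin_filter: "F \<in> filters \<Longrightarrow> bot \<notin> F"
  unfolding filters_def is_filter_def using bot_least by blast

lemma filter_upward: "F \<in> filters \<Longrightarrow> x \<in> F \<Longrightarrow> x \<le> y \<Longrightarrow> y \<in> F"
  unfolding filters_def is_filter_def by blast

lemma filter_inf: "F \<in> filters \<Longrightarrow> x \<in> F \<Longrightarrow> y \<in> F \<Longrightarrow> inf x y \<in> F"
  unfolding filters_def is_filter_def by blast

lemma filter_inf_iff: "F \<in> filters \<Longrightarrow> inf x y \<in> F \<longleftrightarrow> x \<in> F \<and> y \<in> F"
  by (meson filter_inf filter_upward inf_le1 inf_le2)

lemma filter_nonempty: "F \<in> filters \<Longrightarrow> F \<noteq> {}"
  unfolding filters_def is_filter_def by blast

lemma filter_Inf_fin: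
  assumes "F \<in> filters" "finite A" "A \<noteq> {}" "A \<subseteq> F"
  shows "Inf_fin A \<in> F"
  using assms(2-4) by (induction A rule: finite_ne_induct) (auto intro: filter_inf[OF assms(1)])

definition generated_filter :: "'a::{semilattice_inf,order_bot} set \<Rightarrow> 'a set" where
  "generated_filter S = {w. \<exists>A. finite A \<and> A \<noteq> {} \<and> A \<subseteq> S \<and> Inf_fin A \<le> w}"

lemma subset_generated_filter: "S \<subseteq> generated_filter S"
proof
  fix s assume "s \<in> S"
  then show "s \<in> generated_filter S"
    unfolding generated_filter_def by (intro CollectI exI[of _ "{s}"]) simp
qed

lemma generated_filter_in_filters:
  assumes "S \<noteq> {}" "bot \<notin> generated_filter S"
  shows "generated_filter S \<in> filters"
  unfolding filters_def is_filter_def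
proof (intro CollectI conjI allI impI)
  show "generated_filter S \<noteq> {}" using assms(1) subset_generated_filter by blast
  show "generated_filter S \<noteq> UNIV" using assms(2) by blast
  fix u v
  show "u \<in> generated_filter S \<and> u \<le> v \<Longrightarrow> v \<in> generated_filter S"
    unfolding generated_filter_def using order_trans by blast
  assume "u \<in> generated_filter S \<and> v \<in> generated_filter S"
  then obtain A B where A: "finite A" "A \<noteq> {}" "A \<subseteq> S" "Inf_fin A \<le> u"
    and B: "finite B" "B \<noteq> {}" "B \<subseteq> S" "Inf_fin B \<le> v"
    unfolding generated_filter_def by blast
  have "Inf_fin (A \<union> B) \<le> inf u v"
    using A B by (simp add: Inf_fin.union le_infI1 le_infI2 inf_mono)
  then show "inf u v \<in> generated_filter S"
    unfolding generated_filter_def using A B by (intro CollectI exI[of _ "A \<union> B"]) auto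
qed

lemma ultrafilter_disjoint_meet:
  assumes \<eta>: "\<eta> \<in> ultrafilters" and c: "c \<notin> \<eta>"
  shows "\<exists>y\<in>\<eta>. inf y c = bot"
proof -
  have \<eta>_filter: "\<eta> \<in> filters" using \<eta> unfolding ultrafilters_def by blast
  let ?G = "generated_filter (insert c \<eta>)"
  have "bot \<in> ?G"
  proof (rule ccontr)
    assume "bot \<notin> ?G"
    then have "?G \<in> filters" by (simp add: generated_filter_in_filters)
    moreover have "\<eta> \<subseteq> ?G" "c \<in> ?G" using subset_generated_filter by blast+
    ultimately show False using \<eta> c unfolding ultrafilters_def by blast
  qed
  then obtain A where A: "finite A" "A \<noteq> {}" "A \<subseteq> insert c \<eta>" "Inf_fin A \<le> bot"
    unfolding generated_filter_def by blast
  obtain y0 where "y0 \<in> \<eta>" using filter_nonempty[OF \<eta>_filter] by blast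
  define y where "y = Inf_fin (insert y0 (A - {c}))"
  have "y \<in> \<eta>"
    unfolding y_def using A \<open>y0 \<in> \<eta>\<close> by (intro filter_Inf_fin[OF \<eta>_filter]) auto
  moreover have "inf y c \<le> Inf_fin A"
  proof (rule Inf_fin.boundedI[OF A(1,2)])
    fix a assume "a \<in> A"
    show "inf y c \<le> a"
    proof (cases "a = c")
      case False
      then have "y \<le> a" unfolding y_def using A(1) \<open>a \<in> A\<close> by (intro Inf_fin.coboundedI) auto
      then show ?thesis by (rule le_infI1)
    qed simp
  qed
  ultimately show ?thesis using A(4) by (metis bot_unique)
qed

lemma filter_disjoint_meet_finite:
  assumes \<eta>: "\<eta> \<in> filters" and "finite C" "x \<in> \<eta>"
    and disj: "\<forall>c\<in>C. \<exists>y\<in>\<eta>. inf y c = bot"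
  shows "\<exists>y\<in>\<eta>. y \<le> x \<and> (\<forall>c\<in>C. inf y c = bot)"
proof -
  obtain f where f: "\<And>c. c \<in> C \<Longrightarrow> f c \<in> \<eta> \<and> inf (f c) c = bot"
    using disj by metis
  define y where "y = Inf_fin (insert x (f ` C))"
  have "y \<in> \<eta>" unfolding y_def using assms f by (intro filter_Inf_fin) auto
  moreover have "y \<le> x" unfolding y_def using \<open>finite C\<close> by (simp add: Inf_fin.coboundedI)
  moreover have "inf y c = bot" if "c \<in> C" for c
  proof -
    have "y \<le> f c" unfolding y_def using \<open>finite C\<close> that by (simp add: Inf_fin.coboundedI)
    then have "inf y c \<le> inf (f c) c" by (rule inf_mono) simp
    then show ?thesis using f[OF that] by (metis bot_unique)
  qed
  ultimately show ?thesis by blast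
qed

lemma Union_chain_in_filters:
  assumes "\<C> \<noteq> {}" "\<C> \<subseteq> filters" and chain: "\<forall>F\<in>\<C>. \<forall>G\<in>\<C>. F \<subseteq> G \<or> G \<subseteq> F"
  shows "\<Union>\<C> \<in> filters"
  unfolding filters_def is_filter_def
proof (intro CollectI conjI allI impI)
  show "\<Union>\<C> \<noteq> {}" using assms(1,2) filter_nonempty by blast
  show "\<Union>\<C> \<noteq> UNIV" using assms(2) bot_notin_filter by blast
  fix u v
  show "u \<in> \<Union>\<C> \<and> u \<le> v \<Longrightarrow> v \<in> \<Union>\<C>" using assms(2) filter_upward by blast
  assume "u \<in> \<Union>\<C> \<and> v \<in> \<Union>\<C>"
  then obtain F G where "F \<in> \<C>" "G \<in> \<C>" "u \<in> F" "v \<in> G" by blast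
  then show "inf u v \<in> \<Union>\<C>" using chain assms(2) filter_inf by (metis UnionI subsetD)
qed

lemma exists_ultrafilter:
  assumes "y \<noteq> bot"
  shows "\<exists>M\<in>ultrafilters. y \<in> M"
proof -
  define \<A> where "\<A> = {F \<in> filters. y \<in> F}"
  have "bot \<notin> generated_filter {y}"
    using assms unfolding generated_filter_def by (auto simp: subset_singleton_iff bot_unique)
  then have "generated_filter {y} \<in> \<A>"
    unfolding \<A>_def using generated_filter_in_filters subset_generated_filter by blast
  moreover have "\<Union>\<C> \<in> \<A>" if "\<C> \<noteq> {}" "subset.chain \<A> \<C>" for \<C>
    using that Union_chain_in_filters[of \<C>] unfolding \<A>_def subset.chain_def by blast
  ultimately obtain M where "M \<in> \<A>" "\<forall>X\<in>\<A>. M \<subseteq> X \<longrightarrow> X = M"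
    using subset_Zorn_nonempty[of \<A>] by blast
  then show ?thesis unfolding \<A>_def ultrafilters_def by blast
qed

definition Ubasic :: "'a::{semilattice_inf,order_bot} \<Rightarrow> 'a set \<Rightarrow> 'a set set" where
  "Ubasic x Z = {F \<in> filters. x \<in> F \<and> Z \<inter> F = {}}"

lemma Ubasic_empty: "Ubasic x {} = Ux x"
  by (auto simp: Ubasic_def Ux_def)

lemma Ubasic_inf: "Ubasic (inf x y) (Z \<union> Z') = Ubasic x Z \<inter> Ubasic y Z'"
  by (auto simp: Ubasic_def filter_inf_iff)

lemma topspace_filter_topology: "topspace filter_topology = filters"
  unfolding filter_topology_def topology_generated_by_topspace by (auto simp: Ux_def)

lemma openin_Ux: "openin filter_topology (Ux x)"
  unfolding filter_topology_def by (rule topology_generated_by_Basis) blast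

lemma openin_filters_Diff_Ux: "openin filter_topology (filters - Ux x)"
  unfolding filter_topology_def by (rule topology_generated_by_Basis) blast

lemma openin_Ubasic: "finite Z \<Longrightarrow> openin filter_topology (Ubasic x Z)"
proof (induction Z rule: finite_induct)
  case (insert z Z)
  have "Ubasic x (insert z Z) = Ubasic x Z \<inter> (filters - Ux z)"
    by (auto simp: Ubasic_def Ux_def)
  then show ?case using insert.IH openin_filters_Diff_Ux by auto
qed (simp add: Ubasic_empty openin_Ux)

lemma subbasic_Ubasic_neighbourhood:
  assumes "s = Ux y \<or> s = filters - Ux y" "F \<in> s"
  shows "\<exists>x Z. finite Z \<and> F \<in> Ubasic x Z \<and> Ubasic x Z \<subseteq> s"
  using assms(1)
proof
  assume "s = Ux y"
  then show ?thesis using assms(2) Ubasic_empty[of y] by (metis finite.emptyI order_refl)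
next
  assume s: "s = filters - Ux y"
  then obtain x where "x \<in> F" using assms(2) filter_nonempty by blast
  then have "F \<in> Ubasic x {y}" "Ubasic x {y} \<subseteq> s"
    using assms(2) s by (auto simp: Ubasic_def Ux_def)
  then show ?thesis by blast
qed

lemma filter_topology_basis:
  assumes "openin filter_topology N" "F \<in> N"
  shows "\<exists>x Z. finite Z \<and> F \<in> Ubasic x Z \<and> Ubasic x Z \<subseteq> N"
proof -
  have "generate_topology_on {S. \<exists>x. S = Ux x \<or> S = filters - Ux x} N"
    using assms(1) unfolding filter_topology_def openin_topology_generated_by_iff .
  then have "\<forall>F\<in>N \<inter> filters. \<exists>x Z. finite Z \<and> F \<in> Ubasic x Z \<and> Ubasic x Z \<subseteq> N"
  proof induction
    case (Int a b)
    show ?case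
    proof
      fix F assume F: "F \<in> a \<inter> b \<inter> filters"
      obtain x Z where "finite Z" "F \<in> Ubasic x Z" "Ubasic x Z \<subseteq> a"
        using Int.IH(1) F by blast
      moreover obtain y Z' where "finite Z'" "F \<in> Ubasic y Z'" "Ubasic y Z' \<subseteq> b"
        using Int.IH(2) F by blast
      ultimately
      show "\<exists>x Z. finite Z \<and> F \<in> Ubasic x Z \<and> Ubasic x Z \<subseteq> a \<inter> b"
        by (intro exI[of _ "inf x y"] exI[of _ "Z \<union> Z'"]) (auto simp: Ubasic_inf)
    qed
  next
    case (UN K)
    show ?case
    proof
      fix F assume "F \<in> \<Union>K \<inter> filters"
      then obtain k where "k \<in> K" "F \<in> k \<inter> filters" by blast
      then obtain x Z where "finite Z" "F \<in> Ubasic x Z" "Ubasic x Z \<subseteq> k"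
        using UN.IH by blast
      then show "\<exists>x Z. finite Z \<and> F \<in> Ubasic x Z \<and> Ubasic x Z \<subseteq> \<Union>K"
        using \<open>k \<in> K\<close> by blast
    qed
  next
    case (Basis s)
    then show ?case using subbasic_Ubasic_neighbourhood by blast
  qed simp
  moreover have "F \<in> filters"
    using assms openin_subset topspace_filter_topology by blast
  ultimately show ?thesis using assms(2) by blast
qed

lemma in_closure_of_filter_topology:
  "F \<in> filter_topology closure_of S \<longleftrightarrow>
     F \<in> filters \<and> (\<forall>x Z. finite Z \<and> F \<in> Ubasic x Z \<longrightarrow> Ubasic x Z \<inter> S \<noteq> {})"
  (is "_ \<longleftrightarrow> _ \<and> ?basic")
proof -
  have "?basic \<longleftrightarrow> (\<forall>T. F \<in> T \<and> openin filter_topology T \<longrightarrow> (\<exists>y. y \<in> S \<and> y \<in> T))"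
  proof
    assume ?basic
    show "\<forall>T. F \<in> T \<and> openin filter_topology T \<longrightarrow> (\<exists>y. y \<in> S \<and> y \<in> T)"
    proof (intro allI impI)
      fix T assume "F \<in> T \<and> openin filter_topology T"
      then obtain x Z where "finite Z" "F \<in> Ubasic x Z" "Ubasic x Z \<subseteq> T"
        using filter_topology_basis by blast
      then show "\<exists>y. y \<in> S \<and> y \<in> T" using \<open>?basic\<close> by blast
    qed
  next
    assume open_meets: "\<forall>T. F \<in> T \<and> openin filter_topology T \<longrightarrow> (\<exists>y. y \<in> S \<and> y \<in> T)"
    show ?basic
    proof (intro allI impI)
      fix x Z assume "finite Z \<and> F \<in> Ubasic x Z"
      then show "Ubasic x Z \<inter> S \<noteq> {}"
        using open_meets openin_Ubasic[of Z x] by blast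
    qed
  qed
  then show ?thesis unfolding in_closure_of topspace_filter_topology by blast
qed

lemma subtopology_topology_generated_by:
  assumes "U \<subseteq> \<Union>\<S>"
  shows "topology (arbitrary union_of (finite intersection_of (\<lambda>S. S \<in> \<S>) relative_to U))
           = subtopology (topology_generated_by \<S>) U"
proof (rule topology_base_unique)
  fix B assume "(finite intersection_of (\<lambda>S. S \<in> \<S>) relative_to U) B"
  then obtain \<U> where \<U>: "finite \<U>" "\<U> \<subseteq> \<S>" "B = U \<inter> \<Inter>\<U>"
    unfolding relative_to_def intersection_of_def by auto
  have "openin (topology_generated_by \<S>) (\<Union>\<S> \<inter> \<Inter>\<U>)"
    using \<U>(1,2) openin_topspace[of "topology_generated_by \<S>"]
    by (intro openin_Int_Inter) (auto intro: topology_generated_by_Basis)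
  moreover have "B = (\<Union>\<S> \<inter> \<Inter>\<U>) \<inter> U" using \<U>(3) assms by blast
  ultimately show "openin (subtopology (topology_generated_by \<S>) U) B"
    unfolding openin_subtopology by blast
next
  fix W p assume "openin (subtopology (topology_generated_by \<S>) U) W" "p \<in> W"
  then obtain N where N: "generate_topology_on \<S> N" "W = N \<inter> U"
    unfolding openin_subtopology openin_topology_generated_by_iff by blast
  then obtain T where "(finite' intersection_of (\<lambda>S. S \<in> \<S>)) T" "p \<in> T" "T \<subseteq> N"
    using \<open>p \<in> W\<close> unfolding generate_topology_on_eq union_of_def by blast
  then obtain \<U> where \<U>: "finite \<U>" "\<U> \<subseteq> \<S>" "p \<in> \<Inter>\<U>" "\<Inter>\<U> \<subseteq> N"
    unfolding intersection_of_def by blast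
  then have "(finite intersection_of (\<lambda>S. S \<in> \<S>) relative_to U) (U \<inter> \<Inter>\<U>)"
    unfolding relative_to_def intersection_of_def by blast
  moreover have "p \<in> U \<inter> \<Inter>\<U>" "U \<inter> \<Inter>\<U> \<subseteq> W" using \<U> N \<open>p \<in> W\<close> by blast+
  ultimately show "\<exists>B. (finite intersection_of (\<lambda>S. S \<in> \<S>) relative_to U) B \<and> p \<in> B \<and> B \<subseteq> W"
    by blast
qed

lemma Ux_subset_cover:
  assumes "finite A" "A \<noteq> {}" "A \<subseteq> insert x Z" "Inf_fin A \<le> y"
  shows "Ux x \<subseteq> Ux y \<union> (\<Union>z\<in>A \<inter> Z. filters - Ux z)"
proof
  fix F assume "F \<in> Ux x"
  then have F: "F \<in> filters" "x \<in> F" by (auto simp: Ux_def)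
  show "F \<in> Ux y \<union> (\<Union>z\<in>A \<inter> Z. filters - Ux z)"
  proof (cases "A \<subseteq> F")
    case True
    then have "Inf_fin A \<in> F" using F(1) assms(1,2) by (rule filter_Inf_fin[rotated 3])
    then have "y \<in> F" using F(1) assms(4) filter_upward by blast
    then show ?thesis using F by (auto simp: Ux_def)
  next
    case False
    then obtain a where "a \<in> A" "a \<notin> F" by blast
    then show ?thesis using F assms(3) by (auto simp: Ux_def)
  qed
qed

text \<open>If x and the excluded elements z (those with
  filters - Ux z in the cover) generate a proper filter G, then G lies in some Ux y of the cover,
  and y \<in> G is witnessed by finitely many of them; otherwise bot \<in> G is.\<close>
lemma Ux_subbasic_cover_finite:
  assumes \<C>: "\<C> \<subseteq> {S. \<exists>y. S = Ux y \<or> S = filters - Ux y}" "Ux x \<subseteq> \<Union>\<C>"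
  shows "\<exists>\<C>'. finite \<C>' \<and> \<C>' \<subseteq> \<C> \<and> Ux x \<subseteq> \<Union>\<C>'"
proof -
  define Z where "Z = {z. filters - Ux z \<in> \<C>}"
  let ?G = "generated_filter (insert x Z)"
  obtain y A where A: "finite A" "A \<noteq> {}" "A \<subseteq> insert x Z" "Inf_fin A \<le> y"
    and y: "Ux y = {} \<or> Ux y \<in> \<C>"
  proof (cases "bot \<in> ?G")
    case True
    moreover have "Ux bot = {}" by (auto simp: Ux_def bot_notin_filter)
    ultimately show thesis using that unfolding generated_filter_def by blast
  next
    case False
    then have "?G \<in> filters" by (simp add: generated_filter_in_filters)
    then have "?G \<in> Ux x" using subset_generated_filter[of "insert x Z"] by (auto simp: Ux_def)
    then obtain S where "S \<in> \<C>" "?G \<in> S" using \<C>(2) by blast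
    moreover have "?G \<in> Ux z" if "z \<in> Z" for z
      using that \<open>?G \<in> filters\<close> subset_generated_filter[of "insert x Z"] by (auto simp: Ux_def)
    ultimately obtain y where "Ux y \<in> \<C>" "y \<in> ?G"
      using \<C>(1) Z_def by (auto simp: Ux_def)
    then show thesis using that unfolding generated_filter_def by blast
  qed
  let ?\<C>' = "insert (Ux y) ((\<lambda>z. filters - Ux z) ` (A \<inter> Z)) - {{}}"
  have "finite ?\<C>'" "?\<C>' \<subseteq> \<C>" using A(1) y Z_def by auto
  moreover have "Ux x \<subseteq> \<Union>?\<C>'" using Ux_subset_cover[OF A] by blast
  ultimately show ?thesis by blast
qed

lemma compactin_Ux: "compactin filter_topology (Ux x)"
proof -
  let ?\<S> = "{S. \<exists>y. S = Ux y \<or> S = filters - Ux y}"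
  have "Ux x \<subseteq> \<Union>?\<S>" by blast
  then have "compact_space (subtopology filter_topology (Ux x))"
    unfolding filter_topology_def
    by (intro Alexander_subbase_alt[of "Ux x" ?\<S>] Ux_subbasic_cover_finite
        subtopology_topology_generated_by) auto
  then show ?thesis by (simp add: compactin_subspace topspace_filter_topology Ux_def)
qed

lemma compactin_Ubasic:
  assumes "finite Z"
  shows "compactin filter_topology (Ubasic x Z)"
proof -
  have "filters - (filters - \<Union>(Ux ` Z)) = \<Union>(Ux ` Z)" by (auto simp: Ux_def)
  moreover have "openin filter_topology (\<Union>(Ux ` Z))" using openin_Ux by blast
  ultimately have "closedin filter_topology (filters - \<Union>(Ux ` Z))"
    by (simp add: closedin_def topspace_filter_topology)
  moreover have "Ubasic x Z = (filters - \<Union>(Ux ` Z)) \<inter> Ux x"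
    by (auto simp: Ubasic_def Ux_def)
  ultimately show ?thesis using closed_Int_compactin compactin_Ux by metis
qed

lemma tight_filters_subset_filters: "tight_filters \<subseteq> filters"
  unfolding tight_filters_def using closure_of_subset_topspace topspace_filter_topology by metis

lemma Ubasic_meets_ultrafilters:
  assumes "y \<noteq> bot" "y \<le> x" "\<forall>z\<in>Z. inf y z = bot"
  shows "Ubasic x Z \<inter> ultrafilters \<noteq> {}"
proof -
  obtain M where M: "M \<in> ultrafilters" "y \<in> M" using exists_ultrafilter[OF assms(1)] by blast
  then have "M \<in> filters" unfolding ultrafilters_def by blast
  then have "M \<in> Ubasic x Z"
    using M assms(2,3) bot_notin_filter filter_upward filter_inf by (fastforce simp: Ubasic_def)
  then show ?thesis using M(1) by blast
qed

lemma tight_filter_meets_finite_cover: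
  assumes \<xi>: "\<xi> \<in> tight_filters" "x \<in> \<xi>" and cover: "finite_cover C x"
  shows "\<exists>c\<in>C. c \<in> \<xi>"
proof (rule ccontr)
  assume "\<not> (\<exists>c\<in>C. c \<in> \<xi>)"
  moreover have "finite C" using cover unfolding finite_cover_def by blast
  ultimately have "\<xi> \<in> Ubasic x C"
    using \<xi> tight_filters_subset_filters by (auto simp: Ubasic_def)
  then have "Ubasic x C \<inter> ultrafilters \<noteq> {}"
    using \<xi>(1) \<open>finite C\<close> unfolding tight_filters_def in_closure_of_filter_topology by blast
  then obtain \<eta> where \<eta>: "\<eta> \<in> ultrafilters" "\<eta> \<in> Ubasic x C" by blast
  then have "\<eta> \<in> filters" "x \<in> \<eta>" "\<forall>c\<in>C. \<exists>y\<in>\<eta>. inf y c = bot"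
    using ultrafilter_disjoint_meet unfolding ultrafilters_def Ubasic_def by blast+
  then obtain y where y: "y \<in> \<eta>" "y \<le> x" "\<forall>c\<in>C. inf y c = bot"
    using filter_disjoint_meet_finite \<open>finite C\<close> by blast
  then have "y \<noteq> bot" using bot_notin_filter \<open>\<eta> \<in> filters\<close> by blast
  then show False using cover y unfolding finite_cover_def by (metis inf_commute)
qed

lemma finite_cover_inf_image:
  assumes "finite Z" "\<forall>y. y \<noteq> bot \<and> y \<le> x \<longrightarrow> (\<exists>z\<in>Z. inf y z \<noteq> bot)"
  shows "finite_cover ((\<lambda>z. inf x z) ` Z) x"
  unfolding finite_cover_def
proof (intro conjI ballI allI impI)
  fix y assume y: "y \<noteq> bot \<and> y \<le> x"
  then obtain z where "z \<in> Z" "inf y z \<noteq> bot" using assms(2) by blast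
  moreover have "inf (inf x z) y = inf y z"
    using y by (metis inf.absorb_iff2 inf_commute inf_left_commute)
  ultimately show "\<exists>c\<in>(\<lambda>z. inf x z) ` Z. inf c y \<noteq> bot" by (metis image_eqI)
qed (use assms(1) in auto)

lemma semilattice_embedding_mono:
  assumes "semilattice_embedding \<iota>" "x \<le> y"
  shows "\<iota> x \<le> \<iota> y"
  using assms unfolding semilattice_embedding_def by (metis inf.absorb_iff1)

lemma vimage_filter:
  assumes \<iota>: "semilattice_embedding \<iota>" and \<xi>: "\<xi> \<in> filters" "\<iota> -` \<xi> \<noteq> {}"
  shows "\<iota> -` \<xi> \<in> filters"
  unfolding filters_def is_filter_def
proof (intro CollectI conjI allI impI)
  show "\<iota> -` \<xi> \<noteq> {}" by (fact \<xi>(2))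
  have "bot \<notin> \<iota> -` \<xi>" using \<iota> bot_notin_filter[OF \<xi>(1)] by (simp add: semilattice_embedding_def)
  then show "\<iota> -` \<xi> \<noteq> UNIV" by blast
  fix x y
  show "x \<in> \<iota> -` \<xi> \<and> x \<le> y \<Longrightarrow> y \<in> \<iota> -` \<xi>"
    using semilattice_embedding_mono[OF \<iota>] filter_upward[OF \<xi>(1)] by blast
  show "x \<in> \<iota> -` \<xi> \<and> y \<in> \<iota> -` \<xi> \<Longrightarrow> inf x y \<in> \<iota> -` \<xi>"
    using \<iota> filter_inf[OF \<xi>(1)] by (simp add: semilattice_embedding_def)
qed

lemma vimage_tight_filter:
  assumes \<iota>: "semilattice_embedding \<iota>" "preserves_finite_covers \<iota>"
    and \<xi>: "\<xi> \<in> tight_filters" "\<iota> -` \<xi> \<noteq> {}"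
  shows "\<iota> -` \<xi> \<in> tight_filters"
  unfolding tight_filters_def in_closure_of_filter_topology
proof (intro conjI allI impI)
  have "\<xi> \<in> filters" using \<xi>(1) tight_filters_subset_filters by blast
  then show \<xi>_filter: "\<iota> -` \<xi> \<in> filters" using vimage_filter \<iota>(1) \<xi>(2) by blast
  fix x Z assume xZ: "finite Z \<and> \<iota> -` \<xi> \<in> Ubasic x Z"
  show "Ubasic x Z \<inter> ultrafilters \<noteq> {}"
  proof (cases "\<exists>y. y \<noteq> bot \<and> y \<le> x \<and> (\<forall>z\<in>Z. inf y z = bot)")
    case True
    then show ?thesis using Ubasic_meets_ultrafilters by blast
  next
    case False
    then have "finite_cover ((\<lambda>z. inf x z) ` Z) x" using xZ by (intro finite_cover_inf_image) auto
    then have "finite_cover (\<iota> ` (\<lambda>z. inf x z) ` Z) (\<iota> x)"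
      using \<iota>(2) unfolding preserves_finite_covers_def by blast
    moreover have "\<iota> x \<in> \<xi>" using xZ by (simp add: Ubasic_def)
    ultimately obtain z where "z \<in> Z" "inf x z \<in> \<iota> -` \<xi>"
      using tight_filter_meets_finite_cover[OF \<xi>(1)] by blast
    then have "z \<in> Z \<inter> \<iota> -` \<xi>" using filter_inf_iff[OF \<xi>_filter] by blast
    then show ?thesis using xZ by (auto simp: Ubasic_def)
  qed
qed

lemma Tc_Ubasic:
  assumes "finite Z"
  shows "Ubasic x Z \<inter> tight_filters \<in> Tc"
  unfolding Tc_def tight_topology_def
proof (intro CollectI conjI)
  show "openin (subtopology filter_topology tight_filters) (Ubasic x Z \<inter> tight_filters)"
    unfolding openin_subtopology using openin_Ubasic[OF assms] by blast
  have "closedin filter_topology tight_filters" by (simp add: tight_filters_def)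
  then have "compactin filter_topology (tight_filters \<inter> Ubasic x Z)"
    using closed_Int_compactin compactin_Ubasic[OF assms] by blast
  then show "compactin (subtopology filter_topology tight_filters) (Ubasic x Z \<inter> tight_filters)"
    by (simp add: compactin_subtopology Int_commute)
qed

lemma Tc_finite_Union: "finite \<F> \<Longrightarrow> \<F> \<subseteq> Tc \<Longrightarrow> \<Union>\<F> \<in> Tc"
  unfolding Tc_def by (auto intro: compactin_Union)

lemma Vx_in_Tc: "Vx x \<in> Tc"
  using Tc_Ubasic[of "{}" x] by (simp add: Ubasic_empty Vx_def)

lemma Tc_finite_Union_Ubasic:
  assumes "U \<in> Tc"
  obtains \<F> where "finite \<F>" "\<And>B. B \<in> \<F> \<Longrightarrow> \<exists>x Z. finite Z \<and> B = Ubasic x Z \<inter> tight_filters"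
    "U = \<Union>\<F>"
proof -
  obtain N where N: "openin filter_topology N" "U = N \<inter> tight_filters"
    using assms unfolding Tc_def tight_topology_def openin_subtopology by blast
  define \<C> where "\<C> = {B. (\<exists>x Z. finite Z \<and> B = Ubasic x Z \<inter> tight_filters) \<and> B \<subseteq> U}"
  have "\<forall>B\<in>\<C>. openin tight_topology B"
    unfolding \<C>_def tight_topology_def openin_subtopology using openin_Ubasic by blast
  moreover have "U \<subseteq> \<Union>\<C>"
  proof
    fix F assume "F \<in> U"
    then obtain x Z where "finite Z" "F \<in> Ubasic x Z" "Ubasic x Z \<subseteq> N"
      using filter_topology_basis N by blast
    then show "F \<in> \<Union>\<C>" unfolding \<C>_def using N \<open>F \<in> U\<close> by blast
  qed
  moreover have "compactin tight_topology U" using assms unfolding Tc_def by blast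
  ultimately obtain \<F> where \<F>: "finite \<F>" "\<F> \<subseteq> \<C>" "U \<subseteq> \<Union>\<F>"
    unfolding compactin_def by meson
  show thesis
  proof (rule that[OF \<F>(1)])
    show "\<exists>x Z. finite Z \<and> B = Ubasic x Z \<inter> tight_filters" if "B \<in> \<F>" for B
      using that \<F>(2) unfolding \<C>_def by (blast dest: CollectD conjunct1)
    show "U = \<Union>\<F>" using \<F>(2,3) unfolding \<C>_def by blast
  qed
qed

lemma re_preimage_Ubasic:
  assumes "semilattice_embedding \<iota>" "preserves_finite_covers \<iota>"
  shows "re_preimage \<iota> (Ubasic x Z \<inter> tight_filters) = Ubasic (\<iota> x) (\<iota> ` Z) \<inter> tight_filters"
proof
  show "re_preimage \<iota> (Ubasic x Z \<inter> tight_filters) \<subseteq> Ubasic (\<iota> x) (\<iota> ` Z) \<inter> tight_filters"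
    unfolding re_preimage_def Ubasic_def using tight_filters_subset_filters by blast
  show "Ubasic (\<iota> x) (\<iota> ` Z) \<inter> tight_filters \<subseteq> re_preimage \<iota> (Ubasic x Z \<inter> tight_filters)"
  proof
    fix \<xi> assume \<xi>: "\<xi> \<in> Ubasic (\<iota> x) (\<iota> ` Z) \<inter> tight_filters"
    then have "\<iota> -` \<xi> \<noteq> {}" by (auto simp: Ubasic_def)
    then have "\<iota> -` \<xi> \<in> tight_filters" using vimage_tight_filter[OF assms] \<xi> by blast
    then show "\<xi> \<in> re_preimage \<iota> (Ubasic x Z \<inter> tight_filters)"
      using \<xi> tight_filters_subset_filters unfolding re_preimage_def Ubasic_def by blast
  qed
qed

lemma re_preimage_Union: "re_preimage \<iota> (\<Union>\<F>) = (\<Union>U\<in>\<F>. re_preimage \<iota> U)"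
  unfolding re_preimage_def by blast

lemma Vx_eq_re_preimage:
  assumes "semilattice_embedding \<iota>" "preserves_finite_covers \<iota>"
  shows "Vx (\<iota> x) = re_preimage \<iota> (Vx x)"
  using re_preimage_Ubasic[OF assms, of x "{}"] by (simp add: Ubasic_empty Vx_def)

lemma re_preimage_in_Tc:
  assumes "semilattice_embedding \<iota>" "preserves_finite_covers \<iota>" and "U \<in> Tc"
  shows "re_preimage \<iota> U \<in> Tc"
proof -
  obtain \<F> where \<F>: "finite \<F>" "\<And>B. B \<in> \<F> \<Longrightarrow> \<exists>x Z. finite Z \<and> B = Ubasic x Z \<inter> tight_filters"
    and "U = \<Union>\<F>"
    using Tc_finite_Union_Ubasic[OF assms(3)] by blast
  then have U: "re_preimage \<iota> U = (\<Union>B\<in>\<F>. re_preimage \<iota> B)" by (simp add: re_preimage_Union)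
  have "re_preimage \<iota> B \<in> Tc" if B: "B \<in> \<F>" for B
  proof -
    obtain x Z where "finite Z" "B = Ubasic x Z \<inter> tight_filters" using \<F>(2)[OF B] by blast
    then show ?thesis using re_preimage_Ubasic[OF assms(1,2)] Tc_Ubasic[of "\<iota> ` Z"] by simp
  qed
  then show ?thesis
    unfolding U using Tc_finite_Union \<F>(1) by blast
qed

lemma re_preimage_subset_Union_Vx: "re_preimage \<iota> U \<subseteq> (\<Union>x. Vx (\<iota> x))"
  using tight_filters_subset_filters by (auto simp: re_preimage_def Vx_def Ux_def)

lemma Tc_finite_subcover_Vx:
  assumes "W \<in> Tc" "W \<subseteq> (\<Union>i. Vx (g i))"
  obtains I where "finite I" "W \<subseteq> (\<Union>i\<in>I. Vx (g i))"
proof -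
  have "openin tight_topology (Vx y)" for y
    unfolding tight_topology_def openin_subtopology Vx_def using openin_Ux by blast
  moreover have "compactin tight_topology W" using assms(1) unfolding Tc_def by blast
  ultimately obtain \<F> where "finite \<F>" "\<F> \<subseteq> range (\<lambda>i. Vx (g i))" "W \<subseteq> \<Union>\<F>"
    using assms(2) unfolding compactin_def by (metis (no_types, lifting) imageE)
  then show thesis using that by (metis finite_subset_image)
qed

lemma Tc_covered_by_Vx_in_re_preimage_image:
  assumes \<iota>: "semilattice_embedding \<iota>" "preserves_finite_covers \<iota>" "tight_inclusion \<iota>"
    and W: "W \<in> Tc" "W \<subseteq> (\<Union>x. Vx (\<iota> x))"
  shows "W \<in> re_preimage \<iota> ` Tc"
proof -
  let ?I = "re_preimage \<iota> ` Tc"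
  have Un: "\<And>A B. A \<in> ?I \<Longrightarrow> B \<in> ?I \<Longrightarrow> A \<union> B \<in> ?I"
    and Int: "\<And>A W'. A \<in> ?I \<Longrightarrow> W' \<in> Tc \<Longrightarrow> A \<inter> W' \<in> ?I"
    using \<iota>(3) unfolding tight_inclusion_def Let_def by blast+
  have Vx: "Vx (\<iota> x) \<in> ?I" for x
    using Vx_eq_re_preimage[OF \<iota>(1,2)] Vx_in_Tc by blast
  have Vx_Union: "(\<Union>x\<in>X. Vx (\<iota> x)) \<in> ?I" if "finite X" for X
    using that
  proof (induction X rule: finite_induct)
    case empty
    show ?case by (rule image_eqI[of _ _ "{}"]) (auto simp: re_preimage_def Tc_def)
  next
    case (insert x X)
    then show ?case using Un[OF Vx] by simp
  qed
  obtain X where "finite X" "W \<subseteq> (\<Union>x\<in>X. Vx (\<iota> x))" using Tc_finite_subcover_Vx W by blast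
  then have "(\<Union>x\<in>X. Vx (\<iota> x)) \<inter> W = W" by blast
  then show ?thesis using Int[OF Vx_Union[OF \<open>finite X\<close>] W(1)] by simp
qed

theorem mainTheorem11:
  fixes \<iota> :: "'a::{semilattice_inf,order_bot} \<Rightarrow> 'b::{semilattice_inf,order_bot}"
  assumes "semilattice_embedding \<iota>"
    and "preserves_finite_covers \<iota>"
    and "tight_inclusion \<iota>"
  defines "Y \<equiv> (\<Union>x. Vx (\<iota> x))"
  shows "re_preimage \<iota> ` (Tc :: 'a set set set) = {W \<in> (Tc :: 'b set set set). W \<subseteq> Y}"
proof (intro equalityI subsetI)
  fix W assume "W \<in> re_preimage \<iota> ` Tc"
  then show "W \<in> {W \<in> Tc. W \<subseteq> Y}"
    using re_preimage_in_Tc[OF assms(1,2)] re_preimage_subset_Union_Vx unfolding Y_def by blast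
next
  fix W assume "W \<in> {W \<in> Tc. W \<subseteq> Y}"
  then show "W \<in> re_preimage \<iota> ` Tc"
    using Tc_covered_by_Vx_in_re_preimage_image[OF assms(1-3)] unfolding Y_def by blast
qed

end
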